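(* Let $\mathcal{P}\subset\mathbb{R}^d$ be a finite set of item vectors, $\bm{q}\in\mathbb{R}^d$, $k>1$ an integer, $\lambda\in[0,1]$, $\mu>0$, and assume $\langle\bm{x},\bm{y}\rangle\ge0$ for all $\bm{x},\bm{y}\in\mathcal{P}\cup\{\bm{q}\}$. Then the set function $f_{avg}:2^{\mathcal{P}}\to\mathbb{R}$, $$f_{avg}(\mathcal{S}) = \tfrac{\lambda}{k}\sum_{\bm{p}\in\mathcal{S}}\langle\bm{p},\bm{q}\rangle - \tfrac{2\mu(1-\lambda)}{k(k-1)}\sum_{\{\bm{p},\bm{p}'\}\subseteq\mathcal{S},\,\bm{p}\neq\bm{p}'}\langle\bm{p},\bm{p}'\rangle,$$ is submodular, i.e., $f_{avg}(\mathcal{S}\cup\{\bm{p}\})-f_{avg}(\mathcal{S})\ge f_{avg}(\mathcal{T}\cup\{\bm{p}\})-f_{avg}(\mathcal{T})$ for all $\mathcal{S}\subseteq\mathcal{T}\subseteq\mathcal{P}$ and $\bm{p}\in\mathcal{P}\setminus\mathcal{T}$.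
   Context: The second sum in $f_{avg}$ runs over unordered pairs of distinct elements of $\mathcal{S}$; $k$ is a fixed parameter (not the size of $\mathcal{S}$). The nonnegativity of inner products is the paper's standing assumption (item and user vectors come from a non-negative matrix factorization). *)

theory Defs
  imports "HOL-Analysis.Analysis"
begin

text \<open>Sum of inner products over unordered pairs of distinct elements of S:
  each unordered pair {p,p'} with p \<noteq> p' is counted once, i.e. half the
  sum over ordered pairs of distinct elements.\<close>
definition pair_sum :: "('a::real_inner) set \<Rightarrow> real" where
  "pair_sum S = (\<Sum>(p, p') \<in> {(p, p'). p \<in> S \<and> p' \<in> S \<and> p \<noteq> p'}. inner p p') / 2"

definition f_avg :: "real \<Rightarrow> real \<Rightarrow> nat \<Rightarrow> ('a::real_inner) \<Rightarrow> 'a set \<Rightarrow> real" where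
  "f_avg lam mu k q S =
     lam / real k * (\<Sum>p\<in>S. inner p q)
     - 2 * mu * (1 - lam) / (real k * (real k - 1)) * pair_sum S"

end

theory Submission
  imports Defs
begin

text \<open>Adding p to S changes pair_sum by the inner products of p with the elements of S,
  so the marginal gain of f_avg at S is an affine function of the sum of those inner
  products, with a nonpositive coefficient. Nonnegativity of the inner products makes
  that sum monotone in S, which is exactly submodularity. The relevance term of the
  marginal gain does not depend on S.\<close>

lemma pair_sum_insert:
  fixes S :: "('a::real_inner) set"
  assumes "finite S" and "p \<notin> S"
  shows "pair_sum (insert p S) = pair_sum S + (\<Sum>x\<in>S. inner p x)"
proof -
  define D where "D S = {(a, b). a \<in> S \<and> b \<in> S \<and> a \<noteq> b}" for S :: "'a set"
  define L where "L = Pair p ` S"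
  define R where "R = (\<lambda>b. (b, p)) ` S"
  have fin_D: "finite (D S)"
    by (rule finite_subset[of _ "S \<times> S"]) (auto simp: D_def assms(1))
  have fin_LR: "finite L" "finite R"
    using assms(1) by (simp_all add: L_def R_def)
  have D_insert: "D (insert p S) = D S \<union> (L \<union> R)"
    using assms(2) by (auto simp: D_def L_def R_def)
  have disj: "D S \<inter> (L \<union> R) = {}" "L \<inter> R = {}"
    using assms(2) by (auto simp: D_def L_def R_def)
  have sum_L: "(\<Sum>(a, b)\<in>L. inner a b) = (\<Sum>x\<in>S. inner p x)"
    unfolding L_def by (subst sum.reindex) (auto simp: inj_on_def)
  have sum_R: "(\<Sum>(a, b)\<in>R. inner a b) = (\<Sum>x\<in>S. inner p x)"
    unfolding R_def by (subst sum.reindex) (auto simp: inj_on_def inner_commute)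
  have "(\<Sum>(a, b)\<in>D (insert p S). inner a b)
      = (\<Sum>(a, b)\<in>D S. inner a b) + (\<Sum>(a, b)\<in>L. inner a b) + (\<Sum>(a, b)\<in>R. inner a b)"
    unfolding D_insert
    by (simp add: sum.union_disjoint fin_D fin_LR disj)
  then show ?thesis
    unfolding pair_sum_def D_def[symmetric] sum_L sum_R by simp
qed

lemma f_avg_insert_diff:
  fixes S :: "('a::real_inner) set"
  assumes "finite S" and "p \<notin> S"
  shows "f_avg lam mu k q (insert p S) - f_avg lam mu k q S
       = lam / real k * inner p q
         - 2 * mu * (1 - lam) / (real k * (real k - 1)) * (\<Sum>x\<in>S. inner p x)"
  using pair_sum_insert[OF assms] assms
  by (simp add: f_avg_def ring_distribs)

lemma f_avg_insert_diff_antimono: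
  fixes S T :: "('a::real_inner) set"
  assumes "S \<subseteq> T" "finite T" "p \<notin> T"
    and "\<And>x. x \<in> T \<Longrightarrow> inner p x \<ge> 0"
    and "k > 1" "lam \<le> 1" "mu \<ge> 0"
  shows "f_avg lam mu k q (insert p T) - f_avg lam mu k q T
       \<le> f_avg lam mu k q (insert p S) - f_avg lam mu k q S"
proof -
  have "0 \<le> 2 * mu * (1 - lam) / (real k * (real k - 1))"
    using assms(5-7) by simp
  moreover have "(\<Sum>x\<in>S. inner p x) \<le> (\<Sum>x\<in>T. inner p x)"
    using assms(1,2,4) by (intro sum_mono2) auto
  ultimately have "2 * mu * (1 - lam) / (real k * (real k - 1)) * (\<Sum>x\<in>S. inner p x)
      \<le> 2 * mu * (1 - lam) / (real k * (real k - 1)) * (\<Sum>x\<in>T. inner p x)"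
    by (rule mult_left_mono[rotated])
  moreover have "finite S" "p \<notin> S"
    using assms(1-3) finite_subset by blast+
  ultimately show ?thesis
    using assms(2,3) by (simp add: f_avg_insert_diff)
qed

theorem lemma1:
  fixes P :: "(real ^ 'd) set" and q :: "real ^ 'd"
    and k :: nat and lam mu :: real
  assumes "finite P"
    and "k > 1"
    and "0 \<le> lam" and "lam \<le> 1"
    and "mu > 0"
    and "\<And>x y. x \<in> P \<union> {q} \<Longrightarrow> y \<in> P \<union> {q} \<Longrightarrow> inner x y \<ge> 0"
  shows "\<forall>S T p. S \<subseteq> T \<and> T \<subseteq> P \<and> p \<in> P - T \<longrightarrow>
           f_avg lam mu k q (S \<union> {p}) - f_avg lam mu k q S
             \<ge> f_avg lam mu k q (T \<union> {p}) - f_avg lam mu k q T"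
proof (intro allI impI)
  fix S T p
  assume "S \<subseteq> T \<and> T \<subseteq> P \<and> p \<in> P - T"
  then have "S \<subseteq> T" "T \<subseteq> P" "p \<in> P" "p \<notin> T" by auto
  moreover have "finite T"
    using \<open>T \<subseteq> P\<close> assms(1) by (rule finite_subset)
  moreover have "\<And>x. x \<in> T \<Longrightarrow> inner p x \<ge> 0"
    using \<open>T \<subseteq> P\<close> \<open>p \<in> P\<close> assms(6) by blast
  ultimately show "f_avg lam mu k q (S \<union> {p}) - f_avg lam mu k q S
      \<ge> f_avg lam mu k q (T \<union> {p}) - f_avg lam mu k q T"
    using f_avg_insert_diff_antimono[of S T p k lam mu q] assms(2,4,5) by simp
qed

end
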